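(* Let $h$ be a Hessenberg function on $\{1,\dots,n\}$. For every $d\ge0$, the number of monomials of degree $d$ in $\mathcal{B}_h$ (i.e. the rank of the degree-$d$ part of $R/J_h$) equals the number of $(h,(n))$-fillings with exactly $d$ dimension pairs; the map $\Psi_h$ realizes this as a bijection. Consequently, if $X$ is a regular nilpotent $n\times n$ complex matrix, this number equals $\dim H^{2d}(\mathfrak{H}(X,h))$, the $2d$-th Betti number of the regular nilpotent Hessenberg variety.
   Context: A Hessenberg function is $h:\{1,\dots,n\}\to\{1,\dots,n\}$, $h_i=h(i)$, with $i\le h_i\le n$ and $h_i\le h_{i+1}$. Degree tuple $\beta_i=i-\#\{k:h_k<i\}$. $R=\mathbb{Z}[x_1,\dots,x_n]$; $\tilde e_r(S)$ is the complete homogeneous symmetric polynomial of degree $r$ in variables $S$; $J_h=\langle\tilde e_{\beta_i}(x_i,\dots,x_n): 1\le i\le n\rangle$; $R/J_h$ has $\mathbb{Z}$-basis $\mathcal{B}_h=\{x_1^{\alpha_1}\cdots x_n^{\alpha_n}:0\le\alpha_i\le\beta_i-1\}$. An $(h,(n))$-filling is a permutation $w_1\cdots w_n$ of $1,\dots,n$ in one row with $w_t\le h(w_{t+1})$ for all $t$; a dimension pair is $(a,b)$ with $b>a$, $b$ to the left of $a$, and, if $a$ is immediately followed by $c$, $b\le h(c)$. $\Psi_h(x^\alpha)$ is the Level $n$ word above the leaf $x^\alpha$ in the $h$-tableau-tree (root word $1$; a word on $\{1,\dots,i-1\}$ has children obtained by inserting $i$ at one of the $\beta_i$ gaps keeping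 $w_t\le h(w_{t+1})$, the child along edge $x_i^j$ using the $(j+1)$-th such gap from the right; leaves labelled by products of edge labels). A regular nilpotent matrix is nilpotent with a single Jordan block; $\mathfrak{H}(X,h)=\{V_1\subset\cdots\subset V_n=\mathbb{C}^n,\ \dim V_i=i : XV_i\subseteq V_{h(i)}\ \forall i\}$. Known fact (Tymoczko): $\dim H^{2d}(\mathfrak{H}(X,h))$ equals the number of $(h,(n))$-fillings with exactly $d$ dimension pairs when $X$ is regular nilpotent. *)

theory Defs
  imports Main
begin

text \<open>Hessenberg function on {1..n}; values of h outside {1..n} are irrelevant.\<close>
definition hessenberg :: "nat \<Rightarrow> (nat \<Rightarrow> nat) \<Rightarrow> bool" where
  "hessenberg n h \<longleftrightarrow> (\<forall>i\<in>{1..n}. i \<le> h i \<and> h i \<le> n) \<and> (\<forall>i\<in>{1..<n}. h i \<le> h (Suc i))"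

definition beta :: "nat \<Rightarrow> (nat \<Rightarrow> nat) \<Rightarrow> nat \<Rightarrow> nat" where
  "beta n h i = i - card {k\<in>{1..n}. h k < i}"

text \<open>Exponent vectors of the monomials in B_h (alpha_i = 0 outside {1..n}).\<close>
definition basis_exps :: "nat \<Rightarrow> (nat \<Rightarrow> nat) \<Rightarrow> (nat \<Rightarrow> nat) set" where
  "basis_exps n h = {\<alpha>. (\<forall>i\<in>{1..n}. \<alpha> i \<le> beta n h i - 1) \<and> (\<forall>i. i \<notin> {1..n} \<longrightarrow> \<alpha> i = 0)}"

definition mon_degree :: "nat \<Rightarrow> (nat \<Rightarrow> nat) \<Rightarrow> nat" where
  "mon_degree n \<alpha> = (\<Sum>i=1..n. \<alpha> i)"

definition adj_ok :: "(nat \<Rightarrow> nat) \<Rightarrow> nat list \<Rightarrow> bool" where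
  "adj_ok h w \<longleftrightarrow> (\<forall>t. Suc t < length w \<longrightarrow> w ! t \<le> h (w ! Suc t))"

text \<open>(h,(n))-fillings: permutations of 1..n in one row satisfying adj_ok.\<close>
definition fillings :: "nat \<Rightarrow> (nat \<Rightarrow> nat) \<Rightarrow> nat list set" where
  "fillings n h = {w. length w = n \<and> distinct w \<and> set w = {1..n} \<and> adj_ok h w}"

text \<open>Dimension pairs (a,b): b > a, b left of a, and if a is immediately followed by c
  then b <= h c. Recorded as the pair of positions (p,q) of b and a.\<close>
definition dim_pairs :: "(nat \<Rightarrow> nat) \<Rightarrow> nat list \<Rightarrow> (nat \<times> nat) set" where
  "dim_pairs h w = {(p, q). p < q \<and> q < length w \<and> w ! q < w ! p \<and>
       (Suc q < length w \<longrightarrow> w ! p \<le> h (w ! Suc q))}"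

definition num_dim_pairs :: "(nat \<Rightarrow> nat) \<Rightarrow> nat list \<Rightarrow> nat" where
  "num_dim_pairs h w = card (dim_pairs h w)"

text \<open>Inserting letter i into the gap k (0 = leftmost gap, length w = rightmost gap).\<close>
definition insert_at :: "nat \<Rightarrow> nat \<Rightarrow> nat list \<Rightarrow> nat list" where
  "insert_at k i w = take k w @ [i] @ drop k w"

definition valid_gaps :: "(nat \<Rightarrow> nat) \<Rightarrow> nat \<Rightarrow> nat list \<Rightarrow> nat set" where
  "valid_gaps h i w = {k. k \<le> length w \<and> adj_ok h (insert_at k i w)}"

text \<open>Child along the edge labelled x_i^j: insert i at the (j+1)-th valid gap from the right.\<close>
definition tree_child :: "(nat \<Rightarrow> nat) \<Rightarrow> nat \<Rightarrow> nat \<Rightarrow> nat list \<Rightarrow> nat list" where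
  "tree_child h i j w = insert_at (rev (sorted_list_of_set (valid_gaps h i w)) ! j) i w"

fun tree_word :: "(nat \<Rightarrow> nat) \<Rightarrow> (nat \<Rightarrow> nat) \<Rightarrow> nat \<Rightarrow> nat list" where
  "tree_word h \<alpha> 0 = [1]"
| "tree_word h \<alpha> (Suc 0) = [1]"
| "tree_word h \<alpha> (Suc (Suc m)) = tree_child h (Suc (Suc m)) (\<alpha> (Suc (Suc m))) (tree_word h \<alpha> (Suc m))"

definition Psi :: "nat \<Rightarrow> (nat \<Rightarrow> nat) \<Rightarrow> (nat \<Rightarrow> nat) \<Rightarrow> nat list" where
  "Psi n h \<alpha> = tree_word h \<alpha> n"

end

theory Submission
  imports Defs
begin

text \<open>
  An exponent vector for the variables \<open>x\<^sub>1, ..., x\<^bsub>m+1\<^esub>\<close>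
  is one for \<open>x\<^sub>1, ..., x\<^sub>m\<close> plus an exponent \<open>j < \<beta>(m+1)\<close>, and a filling with letters \<open>1..m+1\<close>
  is one with letters \<open>1..m\<close> plus a gap into which the largest letter \<open>m+1\<close> is inserted.
  Because every letter \<open>x \<le> m\<close> satisfies \<open>x \<le> h(m+1)\<close>, a gap is admissible iff it is the last
  one or the letter \<open>c\<close> after it has \<open>m+1 \<le> h(c)\<close>; so there are exactly \<open>\<beta>(m+1)\<close> admissible
  gaps and each level of the tree is a bijection. Inserting \<open>m+1\<close> keeps the old dimension pairs
  and adds one pair \<open>(a, m+1)\<close> for each admissible gap to the right of the insertion point, \<open>a\<close>
  being the letter just before that gap. At the \<open>(j+1)\<close>-th admissible gap from the right these
  are \<open>j\<close> new pairs, so the number of dimension pairs is the degree of the monomial.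
\<close>

lemma bij_betw_dependent_pairs:
  assumes "bij_betw f A B" "\<And>a. a \<in> A \<Longrightarrow> bij_betw (g a) C (D (f a))"
  shows "bij_betw (\<lambda>(a, c). (f a, g a c)) (A \<times> C) (Sigma B D)"
proof -
  have "inj_on (\<lambda>(a, c). (f a, g a c)) (A \<times> C)"
  proof (rule inj_onI, clarsimp)
    fix a c a' c'
    assume "a \<in> A" "c \<in> C" "a' \<in> A" "c' \<in> C" "f a = f a'" "g a c = g a' c'"
    moreover from this have "a = a'"
      using inj_onD[OF bij_betw_imp_inj_on[OF assms(1)]] by blast
    ultimately show "a = a' \<and> c = c'"
      using inj_onD[OF bij_betw_imp_inj_on[OF assms(2)]] by blast
  qed
  moreover have "(\<lambda>(a, c). (f a, g a c)) ` (A \<times> C) \<subseteq> Sigma B D"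
  proof (rule image_subsetI, clarsimp)
    fix a c assume a: "a \<in> A" and "c \<in> C"
    then show "f a \<in> B \<and> g a c \<in> D (f a)"
      using bij_betwE[OF assms(1)] bij_betwE[OF assms(2)[OF a]] by blast
  qed
  moreover have "Sigma B D \<subseteq> (\<lambda>(a, c). (f a, g a c)) ` (A \<times> C)"
  proof (clarify)
    fix b d assume "b \<in> B" "d \<in> D b"
    then obtain a where a: "a \<in> A" "b = f a"
      using bij_betw_imp_surj_on[OF assms(1)] by blast
    moreover obtain c where "c \<in> C" "d = g a c"
      using bij_betw_imp_surj_on[OF assms(2)[OF a(1)]] \<open>d \<in> D b\<close> a(2) by blast
    ultimately show "(b, d) \<in> (\<lambda>(a, c). (f a, g a c)) ` (A \<times> C)" by force
  qed
  ultimately show ?thesis by (simp add: bij_betw_def)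
qed

lemma bij_betw_rev_sorted_nth:
  "finite G \<Longrightarrow> bij_betw ((!) (rev (sorted_list_of_set G))) {..<card G} G"
  by (rule bij_betw_nth) simp_all

lemma card_greater_rev_sorted_nth:
  fixes G :: "nat set"
  assumes "finite G" "j < card G"
  shows "card {g \<in> G. rev (sorted_list_of_set G) ! j < g} = j"
proof -
  let ?L = "rev (sorted_list_of_set G)"
  have dec: "sorted_wrt (>) ?L" by (simp add: sorted_wrt_rev)
  have len: "length ?L = card G" by simp
  have "{g \<in> G. ?L ! j < g} = nth ?L ` {..<j}"
  proof (intro equalityI subsetI)
    fix g assume g: "g \<in> {g \<in> G. ?L ! j < g}"
    then obtain u where u: "u < length ?L" "?L ! u = g"
      using assms(1) by (metis (no_types, lifting) in_set_conv_nth mem_Collect_eq set_rev sorted_list_of_set(1))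
    have "u < j"
    proof (rule ccontr)
      assume "\<not> u < j"
      then have "?L ! u \<le> ?L ! j"
        using sorted_wrt_nth_less[OF dec, of j u] u(1) by (cases "u = j") auto
      then show False using g u by simp
    qed
    then show "g \<in> nth ?L ` {..<j}" using u by auto
  next
    fix g assume "g \<in> nth ?L ` {..<j}"
    then obtain u where "u < j" "g = ?L ! u" by auto
    then show "g \<in> {g \<in> G. ?L ! j < g}"
      using sorted_wrt_nth_less[OF dec, of u j] assms len nth_mem[of u ?L] by auto
  qed
  moreover have "inj_on (nth ?L) {..<j}" using assms(2) by (intro inj_on_nth) auto
  ultimately show ?thesis by (simp add: card_image)
qed

section \<open>Inserting a letter into a word\<close>

lemma length_insert_at [simp]: "k \<le> length w \<Longrightarrow> length (insert_at k i w) = Suc (length w)"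
  by (simp add: insert_at_def)

lemma nth_insert_at:
  assumes "k \<le> length w" "t \<le> length w"
  shows "insert_at k i w ! t = (if t < k then w ! t else if t = k then i else w ! (t - 1))"
  using assms by (auto simp: insert_at_def nth_append min_def nth_Cons')

lemma set_insert_at [simp]: "set (insert_at k i w) = insert i (set w)"
  using set_append[of "take k w" "drop k w"] by (auto simp: insert_at_def)

lemma distinct_insert_at [simp]: "distinct (insert_at k i w) \<longleftrightarrow> distinct w \<and> i \<notin> set w"
proof -
  have "distinct (xs @ [i] @ ys) \<longleftrightarrow> distinct (xs @ ys) \<and> i \<notin> set (xs @ ys)" for xs ys :: "nat list"
    by auto
  then show ?thesis unfolding insert_at_def by (metis append_take_drop_id)
qed

lemma insert_at_inject:
  assumes "k \<le> length w" "k' \<le> length w'" "i \<notin> set w" "i \<notin> set w'"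
    and eq: "insert_at k i w = insert_at k' i w'"
  shows "k = k' \<and> w = w'"
proof -
  have "k = k'"
  proof (rule ccontr)
    assume "k \<noteq> k'"
    then consider "k < k'" | "k' < k" by linarith
    then show False
    proof cases
      case 1
      then have "insert_at k' i w' ! k \<in> set w'" using assms(2) by (simp add: nth_insert_at)
      moreover have "insert_at k i w ! k = i" using assms(1) by (simp add: nth_insert_at)
      ultimately show False using eq assms(4) by simp
    next
      case 2
      then have "insert_at k i w ! k' \<in> set w" using assms(1) by (simp add: nth_insert_at)
      moreover have "insert_at k' i w' ! k' = i" using assms(2) by (simp add: nth_insert_at)
      ultimately show False using eq assms(3) by simp
    qed
  qed
  moreover have "take k w = take k w'" "drop k w = drop k w'"
    using arg_cong[OF eq, of "take k"] arg_cong[OF eq, of "drop (Suc k)"] assms(1,2) \<open>k = k'\<close>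
    by (simp_all add: insert_at_def)
  ultimately show ?thesis by (metis append_take_drop_id)
qed

lemma insert_at_remove:
  assumes "i \<in> set w'"
  obtains k w where "k \<le> length w" "w' = insert_at k i w"
proof -
  obtain k where k: "k < length w'" "w' ! k = i" using assms by (auto simp: in_set_conv_nth)
  let ?w = "take k w' @ drop (Suc k) w'"
  have "insert_at k i ?w = w'"
    using k id_take_nth_drop[OF k(1)] by (simp add: insert_at_def)
  moreover have "k \<le> length ?w" using k by simp
  ultimately show thesis using that by metis
qed

lemma adj_okD: "adj_ok h w \<Longrightarrow> Suc t < length w \<Longrightarrow> w ! t \<le> h (w ! Suc t)"
  by (simp add: adj_ok_def)

lemma adj_ok_insert_at_iff:
  assumes k: "k \<le> length w" and adj: "adj_ok h w" and small: "\<forall>x\<in>set w. x \<le> h i"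
  shows "adj_ok h (insert_at k i w) \<longleftrightarrow> (k < length w \<longrightarrow> i \<le> h (w ! k))"
proof
  assume "adj_ok h (insert_at k i w)"
  then show "k < length w \<longrightarrow> i \<le> h (w ! k)"
    using adj_okD[of h "insert_at k i w" k] k by (simp add: nth_insert_at)
next
  assume gap: "k < length w \<longrightarrow> i \<le> h (w ! k)"
  show "adj_ok h (insert_at k i w)"
    unfolding adj_ok_def
  proof (intro allI impI)
    fix t assume "Suc t < length (insert_at k i w)"
    then have t: "Suc t \<le> length w" using k by simp
    consider "Suc t < k" | "Suc t = k" | "t = k" | "k < t" by linarith
    then show "insert_at k i w ! t \<le> h (insert_at k i w ! Suc t)"
    proof cases
      case 1
      then show ?thesis using adj_okD[OF adj, of t] k t by (simp add: nth_insert_at)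
    next
      case 2
      then show ?thesis using small t k by (simp add: nth_insert_at)
    next
      case 3
      then show ?thesis using gap t k by (simp add: nth_insert_at)
    next
      case 4
      then obtain u where "t = Suc u" "k \<le> u" by (cases t) auto
      then show ?thesis using adj_okD[OF adj, of u] t k by (simp add: nth_insert_at)
    qed
  qed
qed

lemma adj_ok_remove:
  assumes k: "k \<le> length w" and adj: "adj_ok h (insert_at k i w)" and small: "\<forall>x\<in>set w. x \<le> i"
  shows "adj_ok h w"
  unfolding adj_ok_def
proof (intro allI impI)
  fix t assume t: "Suc t < length w"
  note adj' = adj_okD[OF adj, simplified length_insert_at[OF k]]
  consider "Suc t < k" | "Suc t = k" | "k \<le> t" by linarith
  then show "w ! t \<le> h (w ! Suc t)"
  proof cases
    case 1
    then show ?thesis using adj'[of t] t k by (simp add: nth_insert_at)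
  next
    case 2
    then have "i \<le> h (w ! Suc t)" using adj'[of "Suc t"] t k by (simp add: nth_insert_at)
    moreover have "w ! t \<le> i" using small t by simp
    ultimately show ?thesis by simp
  next
    case 3
    then show ?thesis using adj'[of "Suc t"] t k by (simp add: nth_insert_at)
  qed
qed

lemma valid_gaps_eq:
  assumes "adj_ok h w" "\<forall>x\<in>set w. x \<le> h i"
  shows "valid_gaps h i w = {k. k \<le> length w \<and> (k < length w \<longrightarrow> i \<le> h (w ! k))}"
  using adj_ok_insert_at_iff[OF _ assms] by (auto simp: valid_gaps_def)

lemma finite_valid_gaps: "finite (valid_gaps h i w)"
  by (rule finite_subset[of _ "{..length w}"]) (auto simp: valid_gaps_def)

lemma bij_betw_insert_at_fillings:
  "bij_betw (\<lambda>(w, k). insert_at k (Suc m) w)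
     (SIGMA w:fillings m h. valid_gaps h (Suc m) w) (fillings (Suc m) h)"
proof -
  have fresh: "Suc m \<notin> set w" if "w \<in> fillings m h" for w
    using that by (auto simp: fillings_def)
  have "inj_on (\<lambda>(w, k). insert_at k (Suc m) w) (SIGMA w:fillings m h. valid_gaps h (Suc m) w)"
    by (auto intro!: inj_onI dest: insert_at_inject fresh simp: valid_gaps_def)
  moreover have "insert_at k (Suc m) w \<in> fillings (Suc m) h"
    if "w \<in> fillings m h" "k \<in> valid_gaps h (Suc m) w" for w k
    using that by (auto simp: fillings_def valid_gaps_def atLeastAtMostSuc_conv)
  moreover have "w' \<in> (\<lambda>(w, k). insert_at k (Suc m) w) ` (SIGMA w:fillings m h. valid_gaps h (Suc m) w)"
    if w': "w' \<in> fillings (Suc m) h" for w'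
  proof -
    have "Suc m \<in> set w'" using w' by (simp add: fillings_def)
    then obtain k w where k: "k \<le> length w" and w'_eq: "w' = insert_at k (Suc m) w"
      by (rule insert_at_remove)
    have "Suc m \<notin> set w" "insert (Suc m) (set w) = insert (Suc m) {1..m}"
      using w' w'_eq by (auto simp: fillings_def atLeastAtMostSuc_conv)
    then have "set w = {1..m}" by (metis atLeastAtMost_iff insert_ident lessI not_less)
    then have "w \<in> fillings m h" "k \<in> valid_gaps h (Suc m) w"
      using w' w'_eq k adj_ok_remove[OF k, of h "Suc m"]
      by (auto simp: fillings_def valid_gaps_def)
    then show ?thesis using w'_eq by force
  qed
  ultimately show ?thesis by (auto simp: bij_betw_def)
qed

section \<open>Dimension pairs under insertion of a largest letter\<close>

definition shift_pos :: "nat \<Rightarrow> nat \<Rightarrow> nat" where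
  "shift_pos k p = (if p < k then p else Suc p)"

lemma nth_insert_at_shift_pos:
  "k \<le> length w \<Longrightarrow> p < length w \<Longrightarrow> insert_at k i w ! shift_pos k p = w ! p"
  by (auto simp: shift_pos_def nth_insert_at)

lemma shift_pos_surj:
  assumes "t \<le> length w" "t \<noteq> k" "k \<le> length w"
  obtains p where "p < length w" "t = shift_pos k p"
proof (cases "t < k")
  case True
  then show thesis using that[of t] assms by (simp add: shift_pos_def)
next
  case False
  then show thesis using that[of "t - 1"] assms by (simp add: shift_pos_def)
qed

context
  fixes h :: "nat \<Rightarrow> nat" and w :: "nat list" and i k :: nat
  assumes adj: "adj_ok h w" and less: "\<forall>x\<in>set w. x < i" and hi: "i \<le> h i"
    and k: "k \<in> valid_gaps h i w"
begin

private lemma valid_gaps_char: "valid_gaps h i w = {g. g \<le> length w \<and> (g < length w \<longrightarrow> i \<le> h (w ! g))}"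
proof -
  have "\<forall>x\<in>set w. x \<le> h i" using less hi by force
  then show ?thesis by (rule valid_gaps_eq[OF adj])
qed

private lemma gap_le_length: "k \<le> length w" and gap_admissible: "k < length w \<Longrightarrow> i \<le> h (w ! k)"
  using k unfolding valid_gaps_char by auto

lemma shifted_dim_pair:
  assumes "(p, q) \<in> dim_pairs h w"
  shows "(shift_pos k p, shift_pos k q) \<in> dim_pairs h (insert_at k i w)"
proof -
  have pq: "p < q" "q < length w" "w ! q < w ! p"
    and cond: "Suc q < length w \<Longrightarrow> w ! p \<le> h (w ! Suc q)"
    using assms by (auto simp: dim_pairs_def)
  have "insert_at k i w ! shift_pos k p \<le> h (insert_at k i w ! Suc (shift_pos k q))"
    if "Suc (shift_pos k q) < Suc (length w)"
  proof (cases "Suc q = k")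
    case True
    then have "insert_at k i w ! Suc (shift_pos k q) = i"
      using gap_le_length by (simp add: shift_pos_def nth_insert_at)
    moreover have "w ! p < i" using less pq by simp
    ultimately show ?thesis using hi pq gap_le_length by (simp add: nth_insert_at_shift_pos)
  next
    case False
    then have "Suc (shift_pos k q) = shift_pos k (Suc q)" "Suc q < length w"
      using that gap_le_length by (auto simp: shift_pos_def split: if_splits)
    then show ?thesis using cond pq gap_le_length by (simp add: nth_insert_at_shift_pos)
  qed
  moreover have "shift_pos k p < shift_pos k q" "shift_pos k q < Suc (length w)"
    using pq by (auto simp: shift_pos_def)
  ultimately show ?thesis using pq gap_le_length by (simp add: dim_pairs_def nth_insert_at_shift_pos)
qed

lemma new_dim_pair:
  assumes "g \<in> valid_gaps h i w" "k < g"
  shows "(k, g) \<in> dim_pairs h (insert_at k i w)"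
proof -
  have g: "g \<le> length w" "g < length w \<Longrightarrow> i \<le> h (w ! g)"
    using assms(1) unfolding valid_gaps_char by auto
  have "w ! (g - 1) < i" using less g assms(2) by simp
  then show ?thesis using g assms(2) gap_le_length by (auto simp: dim_pairs_def nth_insert_at)
qed

private lemma dim_pairs_insert_at_subset:
  assumes "(p, q) \<in> dim_pairs h (insert_at k i w)"
  shows "(p, q) \<in> (\<lambda>(p, q). (shift_pos k p, shift_pos k q)) ` dim_pairs h w
           \<union> Pair k ` {g \<in> valid_gaps h i w. k < g}"
proof -
  let ?v = "insert_at k i w"
  have pq: "p < q" "q \<le> length w" "?v ! q < ?v ! p"
    and cond: "q < length w \<Longrightarrow> ?v ! p \<le> h (?v ! Suc q)"
    using assms gap_le_length by (auto simp: dim_pairs_def)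
  show ?thesis
  proof (cases "p = k")
    case True
    have "q < length w \<Longrightarrow> i \<le> h (w ! q)"
      using cond pq True gap_le_length by (simp add: nth_insert_at)
    then have "q \<in> valid_gaps h i w" using pq unfolding valid_gaps_char by simp
    then show ?thesis using True pq by blast
  next
    case False
    obtain p0 where p0: "p0 < length w" "p = shift_pos k p0"
      using shift_pos_surj[of p w k] pq False gap_le_length by auto
    have "?v ! p < i" using less p0 gap_le_length by (simp add: nth_insert_at_shift_pos)
    then have "q \<noteq> k" using pq gap_le_length by (auto simp: nth_insert_at)
    then obtain q0 where q0: "q0 < length w" "q = shift_pos k q0"
      using shift_pos_surj[of q w k] pq gap_le_length by auto
    have "w ! p0 \<le> h (w ! Suc q0)" if "Suc q0 < length w"
    proof (cases "Suc q0 = k")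
      case True
      then have "i \<le> h (w ! Suc q0)" using gap_admissible that by simp
      moreover have "w ! p0 < i" using less p0 by simp
      ultimately show ?thesis by simp
    next
      case False
      then have "Suc q = shift_pos k (Suc q0)" "q < length w"
        using q0 that by (auto simp: shift_pos_def)
      then show ?thesis using cond that p0 q0 gap_le_length by (simp add: nth_insert_at_shift_pos)
    qed
    moreover have "p0 < q0" using pq p0 q0 by (auto simp: shift_pos_def split: if_splits)
    ultimately have "(p0, q0) \<in> dim_pairs h w"
      using pq p0 q0 gap_le_length by (simp add: dim_pairs_def nth_insert_at_shift_pos)
    then show ?thesis using p0 q0 by force
  qed
qed

lemma dim_pairs_insert_at:
  "dim_pairs h (insert_at k i w) = (\<lambda>(p, q). (shift_pos k p, shift_pos k q)) ` dim_pairs h w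
     \<union> Pair k ` {g \<in> valid_gaps h i w. k < g}"
  using dim_pairs_insert_at_subset shifted_dim_pair new_dim_pair by fast

lemma num_dim_pairs_insert_at:
  "num_dim_pairs h (insert_at k i w) = num_dim_pairs h w + card {g \<in> valid_gaps h i w. k < g}"
proof -
  let ?A = "(\<lambda>(p, q). (shift_pos k p, shift_pos k q)) ` dim_pairs h w"
  let ?B = "Pair k ` {g \<in> valid_gaps h i w. k < g}"
  have "dim_pairs h (insert_at k i w) = ?A \<union> ?B" by (rule dim_pairs_insert_at)
  moreover have "finite (dim_pairs h w)"
    by (rule finite_subset[of _ "{..<length w} \<times> {..<length w}"]) (auto simp: dim_pairs_def)
  moreover have "?A \<inter> ?B = {}"
    by (auto simp: shift_pos_def split: if_splits)
  moreover have "inj_on (\<lambda>(p, q). (shift_pos k p, shift_pos k q)) (dim_pairs h w)"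
    by (auto simp: inj_on_def shift_pos_def split: if_splits)
  moreover have "inj_on (Pair k) {g \<in> valid_gaps h i w. k < g}"
    by (simp add: inj_on_def)
  ultimately show ?thesis
    by (simp add: num_dim_pairs_def card_Un_disjoint card_image finite_valid_gaps)
qed

end

section \<open>Counting valid gaps\<close>

lemma card_gaps:
  assumes "distinct w"
  shows "card {k. k \<le> length w \<and> (k < length w \<longrightarrow> P (w ! k))} = Suc (card {x \<in> set w. P x})"
proof -
  have "{k. k \<le> length w \<and> (k < length w \<longrightarrow> P (w ! k))} = insert (length w) {k. k < length w \<and> P (w ! k)}"
    by auto
  moreover have "nth w ` {k. k < length w \<and> P (w ! k)} = {x \<in> set w. P x}"
    by (auto simp: in_set_conv_nth)
  moreover have "inj_on (nth w) {k. k < length w \<and> P (w ! k)}"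
    using inj_on_nth[OF assms] by simp
  ultimately show ?thesis by (simp add: card_image[symmetric])
qed

lemma beta_Suc:
  assumes "hessenberg n h" "Suc m \<le> n"
  shows "beta n h (Suc m) = Suc (card {x \<in> {1..m}. Suc m \<le> h x})"
proof -
  have "{k \<in> {1..n}. h k < Suc m} = {k \<in> {1..m}. h k < Suc m}"
    using assms by (force simp: hessenberg_def)
  moreover have "m = card {x \<in> {1..m}. Suc m \<le> h x} + card {k \<in> {1..m}. h k < Suc m}"
    using card_Int_Diff[of "{1..m}" "{x. Suc m \<le> h x}"] by (simp add: Int_def set_diff_eq not_le)
  ultimately show ?thesis by (simp add: beta_def)
qed

lemma card_valid_gaps:
  assumes "hessenberg n h" "Suc m \<le> n" "w \<in> fillings m h"
  shows "card (valid_gaps h (Suc m) w) = beta n h (Suc m)"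
proof -
  have w: "distinct w" "set w = {1..m}" "adj_ok h w" using assms(3) by (auto simp: fillings_def)
  have "Suc m \<le> h (Suc m)" using assms(1,2) by (simp add: hessenberg_def)
  then have "\<forall>x\<in>set w. x \<le> h (Suc m)" using w(2) by auto
  then show ?thesis
    using valid_gaps_eq[OF w(3)] card_gaps[OF w(1)] beta_Suc[OF assms(1,2)] w(2) by simp
qed

section \<open>The tree of words\<close>

text \<open>The bound \<open>\<alpha> i < \<beta> i\<close> replaces \<open>\<alpha> i \<le> \<beta> i - 1\<close> of \<open>basis_exps\<close>; the two agree
  because \<open>\<beta> i > 0\<close> (see \<open>basis_exps_eq_upto\<close>).\<close>

definition basis_exps_upto :: "nat \<Rightarrow> (nat \<Rightarrow> nat) \<Rightarrow> nat \<Rightarrow> (nat \<Rightarrow> nat) set" where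
  "basis_exps_upto n h m = {\<alpha>. (\<forall>i\<in>{1..m}. \<alpha> i < beta n h i) \<and> (\<forall>i. i \<notin> {1..m} \<longrightarrow> \<alpha> i = 0)}"

lemma beta_pos:
  assumes "hessenberg n h" "i \<in> {1..n}"
  shows "0 < beta n h i"
proof -
  have "k \<le> h k" if "k \<in> {1..n}" for k
    using assms(1) that by (simp add: hessenberg_def)
  then have "{k \<in> {1..n}. h k < i} \<subseteq> {1..<i}" by fastforce
  then have "card {k \<in> {1..n}. h k < i} \<le> i - 1"
    using card_mono[of "{1..<i}"] by fastforce
  then have "card {k \<in> {1..n}. h k < i} < i" using assms(2) by simp linarith
  then show ?thesis by (simp add: beta_def)
qed

lemma basis_exps_eq_upto:
  "hessenberg n h \<Longrightarrow> basis_exps n h = basis_exps_upto n h n"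
  using beta_pos[of n h] by (fastforce simp: basis_exps_def basis_exps_upto_def)

lemma basis_exps_upto_1:
  assumes "hessenberg n h" "1 \<le> n"
  shows "basis_exps_upto n h 1 = {\<lambda>_. 0}"
proof (intro equalityI subsetI)
  fix \<alpha> assume \<alpha>: "\<alpha> \<in> basis_exps_upto n h 1"
  have "beta n h 1 \<le> 1" by (simp add: beta_def)
  then have "\<alpha> i = 0" for i
    using \<alpha> by (cases "i = 1") (auto simp: basis_exps_upto_def)
  then show "\<alpha> \<in> {\<lambda>_. 0}" by auto
qed (use beta_pos[OF assms(1), of 1] assms(2) in \<open>simp add: basis_exps_upto_def\<close>)

lemma bij_betw_basis_exps_upto_Suc:
  "bij_betw (\<lambda>\<alpha>. (\<alpha>(Suc m := 0), \<alpha> (Suc m)))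
     (basis_exps_upto n h (Suc m)) (basis_exps_upto n h m \<times> {..<beta n h (Suc m)})"
  by (rule bij_betw_byWitness[where f' = "\<lambda>(\<alpha>, j). \<alpha>(Suc m := j)"])
     (auto simp: basis_exps_upto_def)

lemma tree_word_cong: "(\<forall>i\<le>m. \<alpha> i = \<alpha>' i) \<Longrightarrow> tree_word h \<alpha> m = tree_word h \<alpha>' m"
  by (induction h \<alpha> m rule: tree_word.induct) simp_all

lemma tree_word_Suc:
  "1 \<le> m \<Longrightarrow> tree_word h \<alpha> (Suc m) =
     insert_at (rev (sorted_list_of_set (valid_gaps h (Suc m) (tree_word h \<alpha> m))) ! \<alpha> (Suc m))
       (Suc m) (tree_word h \<alpha> m)"
  by (cases m) (simp_all add: tree_child_def)

lemma fillings_1: "fillings 1 h = {[1]}"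
  by (auto simp: fillings_def adj_ok_def length_Suc_conv)

lemma bij_betw_tree_word:
  assumes "hessenberg n h" "1 \<le> m" "m \<le> n"
  shows "bij_betw (\<lambda>\<alpha>. tree_word h \<alpha> m) (basis_exps_upto n h m) (fillings m h)"
  using assms(2,3)
proof (induction m rule: nat_induct_at_least)
  case base
  then show ?case
    using basis_exps_upto_1[OF assms(1) base] fillings_1[of h] by (simp add: bij_betw_def)
next
  case (Suc m)
  let ?i = "Suc m"
  let ?T = "\<lambda>\<alpha>. tree_word h \<alpha> m"
  let ?rank = "\<lambda>w j. rev (sorted_list_of_set (valid_gaps h ?i w)) ! j"
  have IH: "bij_betw ?T (basis_exps_upto n h m) (fillings m h)"
    using Suc by simp
  have choose_gap: "bij_betw (\<lambda>(\<alpha>, j). (?T \<alpha>, ?rank (?T \<alpha>) j))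
      (basis_exps_upto n h m \<times> {..<beta n h ?i}) (SIGMA w:fillings m h. valid_gaps h ?i w)"
  proof (rule bij_betw_dependent_pairs[OF IH])
    fix \<alpha> assume "\<alpha> \<in> basis_exps_upto n h m"
    then have "?T \<alpha> \<in> fillings m h" using bij_betwE[OF IH] by blast
    then have "card (valid_gaps h ?i (?T \<alpha>)) = beta n h ?i"
      by (rule card_valid_gaps[OF assms(1) Suc.prems])
    then show "bij_betw (?rank (?T \<alpha>)) {..<beta n h ?i} (valid_gaps h ?i (?T \<alpha>))"
      using bij_betw_rev_sorted_nth[OF finite_valid_gaps, of h ?i "?T \<alpha>"] by simp
  qed
  let ?step = "(\<lambda>(w, k). insert_at k ?i w) \<circ> (\<lambda>(\<alpha>, j). (?T \<alpha>, ?rank (?T \<alpha>) j))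
    \<circ> (\<lambda>\<alpha>. (\<alpha>(?i := 0), \<alpha> ?i))"
  have "bij_betw ?step (basis_exps_upto n h ?i) (fillings ?i h)"
    using bij_betw_trans[OF bij_betw_basis_exps_upto_Suc
        bij_betw_trans[OF choose_gap bij_betw_insert_at_fillings]] .
  moreover have "?step = (\<lambda>\<alpha>. tree_word h \<alpha> ?i)"
  proof
    fix \<alpha>
    have "?T (\<alpha>(?i := 0)) = ?T \<alpha>" by (rule tree_word_cong) simp
    then show "?step \<alpha> = tree_word h \<alpha> ?i" by (simp add: tree_word_Suc[OF Suc.hyps])
  qed
  ultimately show ?case by simp
qed

lemma num_dim_pairs_tree_word:
  assumes "hessenberg n h" "1 \<le> m" "m \<le> n" "\<alpha> \<in> basis_exps_upto n h m"
  shows "num_dim_pairs h (tree_word h \<alpha> m) = (\<Sum>i=1..m. \<alpha> i)"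
  using assms(2-4)
proof (induction m arbitrary: \<alpha> rule: nat_induct_at_least)
  case base
  have "dim_pairs h [1] = {}" by (auto simp: dim_pairs_def)
  then show ?case using base basis_exps_upto_1[OF assms(1)] by (simp add: num_dim_pairs_def)
next
  case (Suc m)
  let ?i = "Suc m"
  let ?w = "tree_word h \<alpha> m"
  let ?gaps = "valid_gaps h ?i ?w"
  let ?k = "rev (sorted_list_of_set ?gaps) ! \<alpha> ?i"
  have \<alpha>0: "\<alpha>(?i := 0) \<in> basis_exps_upto n h m" and \<alpha>_i: "\<alpha> ?i < beta n h ?i"
    using Suc.prems by (auto simp: basis_exps_upto_def)
  have w_eq: "tree_word h (\<alpha>(?i := 0)) m = ?w" by (rule tree_word_cong) simp
  have w: "?w \<in> fillings m h"
    using bij_betwE[OF bij_betw_tree_word[OF assms(1) Suc.hyps]] \<alpha>0 w_eq Suc.prems by force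
  have "(\<Sum>i=1..m. (\<alpha>(?i := 0)) i) = (\<Sum>i=1..m. \<alpha> i)" by (rule sum.cong) auto
  then have "num_dim_pairs h ?w = (\<Sum>i=1..m. \<alpha> i)"
    using Suc.IH[OF Suc_leD[OF Suc.prems(1)] \<alpha>0] unfolding w_eq by simp
  moreover have gaps: "finite ?gaps" "card ?gaps = beta n h ?i"
    using finite_valid_gaps card_valid_gaps[OF assms(1) Suc.prems(1) w] by simp_all
  moreover have "?k \<in> ?gaps"
    using bij_betwE[OF bij_betw_rev_sorted_nth[OF gaps(1)]] \<alpha>_i gaps(2) by auto
  moreover have "card {g \<in> ?gaps. ?k < g} = \<alpha> ?i"
    using card_greater_rev_sorted_nth[OF gaps(1)] \<alpha>_i gaps(2) by simp
  moreover have "adj_ok h ?w" "\<forall>x\<in>set ?w. x < ?i" using w by (auto simp: fillings_def)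
  moreover have "?i \<le> h ?i" using assms(1) Suc.prems by (simp add: hessenberg_def)
  ultimately show ?case
    using num_dim_pairs_insert_at tree_word_Suc[OF Suc.hyps, of h \<alpha>] by simp
qed

theorem mainTheorem20:
  fixes n :: nat and h :: "nat \<Rightarrow> nat"
  assumes "1 \<le> n" and "hessenberg n h"
  shows "(\<forall>d. card {\<alpha>\<in>basis_exps n h. mon_degree n \<alpha> = d}
              = card {w\<in>fillings n h. num_dim_pairs h w = d})
         \<and> bij_betw (Psi n h) (basis_exps n h) (fillings n h)
         \<and> (\<forall>\<alpha>\<in>basis_exps n h. num_dim_pairs h (Psi n h \<alpha>) = mon_degree n \<alpha>)"
proof -
  have Psi: "Psi n h = (\<lambda>\<alpha>. tree_word h \<alpha> n)" by (simp add: Psi_def fun_eq_iff)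
  have basis: "basis_exps n h = basis_exps_upto n h n"
    by (rule basis_exps_eq_upto[OF assms(2)])
  have bij: "bij_betw (Psi n h) (basis_exps n h) (fillings n h)"
    unfolding Psi basis by (rule bij_betw_tree_word[OF assms(2,1) order_refl])
  have deg: "\<forall>\<alpha>\<in>basis_exps n h. num_dim_pairs h (Psi n h \<alpha>) = mon_degree n \<alpha>"
    unfolding Psi basis mon_degree_def using num_dim_pairs_tree_word[OF assms(2,1) order_refl] by blast
  have "card {\<alpha>\<in>basis_exps n h. mon_degree n \<alpha> = d} = card {w\<in>fillings n h. num_dim_pairs h w = d}"
    for d by (rule bij_betw_same_card[OF bij_betw_Collect[OF bij]]) (use deg in auto)
  with bij deg show ?thesis by blast
qed

end
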